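(* Let $F:\mathbb{R}^n\rightrightarrows\mathbb{R}^p$ and $G:\mathbb{R}^p\rightrightarrows\mathbb{R}^q$ be nearly convex set-valued mappings with $\operatorname{ri}(\operatorname{rge} F)\cap\operatorname{ri}(\operatorname{dom} G)\neq\emptyset$. Define $M_0(x,z)=\operatorname{ri} F(x)\cap\operatorname{ri} G^{-1}(z)$ for $(x,z)\in\mathbb{R}^n\times\mathbb{R}^q$ and $\operatorname{dom} M_0=\{(x,z):M_0(x,z)\neq\emptyset\}$. Then $$\operatorname{ri}\big(\operatorname{gph}(G\circ F)\big)=\big[\operatorname{ri}(\operatorname{dom} F)\times\operatorname{ri}(\operatorname{rge} G)\big]\cap\operatorname{dom} M_0.$$
   Context: A set $\Omega\subset\mathbb{R}^k$ is nearly convex if there is a convex set $C$ with $C\subset\Omega\subset\overline{C}$. For an arbitrary set $\Omega$, $\operatorname{ri}\Omega=\{a\in\Omega:\exists\delta>0,\ B(a;\delta)\cap\operatorname{aff}\Omega\subset\Omega\}$. For a set-valued mapping $F$: $\operatorname{dom} F=\{x:F(x)\neq\emptyset\}$, $\operatorname{rge} F=\bigcup_x F(x)$, $\operatorname{gph} F=\{(x,y):y\in F(x)\}$; $F$ is nearly convex if $\operatorname{gph} F$ is nearly convex. $G^{-1}(z)=\{y: z\in G(y)\}$, and $(G\circ F)(x)=\bigcup_{y\in F(x)}G(y)$. *)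

theory Defs
  imports "HOL-Analysis.Analysis"
begin

definition nearly_convex :: "'a::real_normed_vector set \<Rightarrow> bool" where
  "nearly_convex \<Omega> \<longleftrightarrow> (\<exists>C. convex C \<and> C \<subseteq> \<Omega> \<and> \<Omega> \<subseteq> closure C)"

definition ri :: "'a::real_normed_vector set \<Rightarrow> 'a set" where
  "ri \<Omega> = {a \<in> \<Omega>. \<exists>\<delta>>0. ball a \<delta> \<inter> affine hull \<Omega> \<subseteq> \<Omega>}"

definition sv_dom :: "('a \<Rightarrow> 'b set) \<Rightarrow> 'a set" where
  "sv_dom F = {x. F x \<noteq> {}}"

definition sv_rge :: "('a \<Rightarrow> 'b set) \<Rightarrow> 'b set" where
  "sv_rge F = (\<Union>x. F x)"

definition sv_gph :: "('a \<Rightarrow> 'b set) \<Rightarrow> ('a \<times> 'b) set" where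
  "sv_gph F = {(x, y). y \<in> F x}"

definition sv_inv :: "('a \<Rightarrow> 'b set) \<Rightarrow> 'b \<Rightarrow> 'a set" where
  "sv_inv G z = {y. z \<in> G y}"

definition sv_comp :: "('b \<Rightarrow> 'c set) \<Rightarrow> ('a \<Rightarrow> 'b set) \<Rightarrow> 'a \<Rightarrow> 'c set" where
  "sv_comp G F x = (\<Union>y\<in>F x. G y)"

definition nearly_convex_map :: "('a::real_normed_vector \<Rightarrow> 'b::real_normed_vector set) \<Rightarrow> bool" where
  "nearly_convex_map F \<longleftrightarrow> nearly_convex (sv_gph F)"

end

theory Submission
  imports Defs
begin

text \<open>Every nearly convex set \<open>W\<close> lies between the relatively open convex set
  \<open>rel_interior W\<close> and its closure, so the calculus of relative interiors of convex sets
  (linear images, products, intersections under a qualification condition, and the fibrewise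
  description of \<open>rel_interior\<close> of a set in a product space) carries over to nearly convex
  sets. The graph of \<open>G \<circ> F\<close> is the projection \<open>((x, y), z) \<mapsto> (x, z)\<close> of
  \<open>(gph F \<times> UNIV) \<inter> {((x, y), z). (y, z) \<in> gph G}\<close>; the qualification condition makes the
  relative interiors of the two pieces meet, and reading off the fibres of \<open>gph F\<close> and of
  the swapped \<open>gph G\<close> gives the formula.\<close>

lemma ri_eq_rel_interior: "ri S = rel_interior (S :: 'a::euclidean_space set)"
  unfolding ri_def using mem_rel_interior_ball by auto

lemma rel_interior_between_convex_closure:
  fixes C W :: "'a::euclidean_space set"
  assumes "convex C" "C \<subseteq> W" "W \<subseteq> closure C"
  shows "rel_interior W = rel_interior C"
proof -
  have hull: "affine hull W = affine hull C"
    using hull_mono[OF assms(2)] hull_mono[OF assms(3)] closure_same_affine_hull by blast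
  have "rel_interior C \<subseteq> rel_interior W"
    using subset_rel_interior[OF assms(2)] hull by simp
  moreover have "rel_interior W \<subseteq> rel_interior (closure C)"
    using subset_rel_interior[OF assms(3)] hull by simp
  ultimately show ?thesis
    using convex_rel_interior_closure[OF assms(1)] by blast
qed

lemma convex_imp_nearly_convex: "convex S \<Longrightarrow> nearly_convex S"
  unfolding nearly_convex_def using closure_subset by blast

lemma nearly_convexI_rel_interior:
  fixes C W :: "'a::euclidean_space set"
  assumes "convex C" "rel_interior C = C" "C \<subseteq> W" "W \<subseteq> closure C"
  shows "nearly_convex W" "rel_interior W = C"
  using assms rel_interior_between_convex_closure[OF assms(1,3,4)]
  unfolding nearly_convex_def by auto

lemma nearly_convex_rel_interior:
  fixes W :: "'a::euclidean_space set"
  assumes "nearly_convex W"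
  shows "convex (rel_interior W)" "W \<subseteq> closure (rel_interior W)"
    and "rel_interior (rel_interior W) = rel_interior W"
proof -
  obtain C where C: "convex C" "C \<subseteq> W" "W \<subseteq> closure C"
    using assms unfolding nearly_convex_def by blast
  then have ri_W: "rel_interior W = rel_interior C"
    by (rule rel_interior_between_convex_closure)
  show "convex (rel_interior W)"
    using ri_W convex_rel_interior[OF C(1)] by simp
  show "W \<subseteq> closure (rel_interior W)"
    using ri_W C(3) convex_closure_rel_interior[OF C(1)] by simp
  show "rel_interior (rel_interior W) = rel_interior W"
    using ri_W rel_interior_rel_interior[OF C(1)] by simp
qed

lemma nearly_convex_linear_image:
  fixes f :: "'a::euclidean_space \<Rightarrow> 'b::euclidean_space"
  assumes "linear f" "nearly_convex W"
  shows "nearly_convex (f ` W)" "rel_interior (f ` W) = f ` rel_interior W"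
proof -
  note R = nearly_convex_rel_interior[OF assms(2)]
  have "convex (f ` rel_interior W)"
    using convex_linear_image[OF assms(1) R(1)] .
  moreover have "rel_interior (f ` rel_interior W) = f ` rel_interior W"
    using rel_interior_convex_linear_image[OF assms(1) R(1)] R(3) by simp
  moreover have "f ` rel_interior W \<subseteq> f ` W"
    using rel_interior_subset by (rule image_mono)
  moreover have "f ` W \<subseteq> closure (f ` rel_interior W)"
    using R(2) closure_linear_image_subset[OF assms(1)] by blast
  ultimately show "nearly_convex (f ` W)" "rel_interior (f ` W) = f ` rel_interior W"
    by (rule nearly_convexI_rel_interior)+
qed

lemma nearly_convex_Times:
  fixes A :: "'a::euclidean_space set" and B :: "'b::euclidean_space set"
  assumes "nearly_convex A" "nearly_convex B"
  shows "nearly_convex (A \<times> B)" "rel_interior (A \<times> B) = rel_interior A \<times> rel_interior B"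
proof -
  note RA = nearly_convex_rel_interior[OF assms(1)]
  note RB = nearly_convex_rel_interior[OF assms(2)]
  have "convex (rel_interior A \<times> rel_interior B)"
    using convex_Times[OF RA(1) RB(1)] .
  moreover have "rel_interior (rel_interior A \<times> rel_interior B) = rel_interior A \<times> rel_interior B"
    using rel_interior_Times[OF RA(1) RB(1)] RA(3) RB(3) by simp
  moreover have "rel_interior A \<times> rel_interior B \<subseteq> A \<times> B"
    using rel_interior_subset by (rule Sigma_mono) (rule rel_interior_subset)
  moreover have "A \<times> B \<subseteq> closure (rel_interior A \<times> rel_interior B)"
    using RA(2) RB(2) by (simp add: closure_Times Sigma_mono)
  ultimately show "nearly_convex (A \<times> B)"
    "rel_interior (A \<times> B) = rel_interior A \<times> rel_interior B"
    by (rule nearly_convexI_rel_interior)+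
qed

lemma nearly_convex_Int:
  fixes A B :: "'a::euclidean_space set"
  assumes "nearly_convex A" "nearly_convex B"
    and meet: "rel_interior A \<inter> rel_interior B \<noteq> {}"
  shows "nearly_convex (A \<inter> B)" "rel_interior (A \<inter> B) = rel_interior A \<inter> rel_interior B"
proof -
  note RA = nearly_convex_rel_interior[OF assms(1)]
  note RB = nearly_convex_rel_interior[OF assms(2)]
  have "\<Inter> (closure ` {rel_interior A, rel_interior B})
      \<subseteq> closure (\<Inter> (rel_interior ` {rel_interior A, rel_interior B}))"
    using RA(1,3) RB(1,3) meet by (intro convex_closure_rel_interior_Int) auto
  then have dense: "A \<inter> B \<subseteq> closure (rel_interior A \<inter> rel_interior B)"
    using RA(2,3) RB(2,3) by auto
  have "convex (rel_interior A \<inter> rel_interior B)"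
    using convex_Int[OF RA(1) RB(1)] .
  moreover have "rel_interior (rel_interior A \<inter> rel_interior B) = rel_interior A \<inter> rel_interior B"
    using convex_rel_interior_inter_two[OF RA(1) RB(1)] RA(3) RB(3) meet by simp
  moreover have "rel_interior A \<inter> rel_interior B \<subseteq> A \<inter> B"
    using rel_interior_subset by blast
  moreover note dense
  ultimately show "nearly_convex (A \<inter> B)"
    "rel_interior (A \<inter> B) = rel_interior A \<inter> rel_interior B"
    by (rule nearly_convexI_rel_interior)+
qed

lemma convex_fibre:
  fixes R :: "('a::real_vector \<times> 'b::real_vector) set"
  assumes "convex R"
  shows "convex {y. (x, y) \<in> R}"
proof (rule convexI)
  fix y1 y2 and u v :: real
  assume y: "y1 \<in> {y. (x, y) \<in> R}" "y2 \<in> {y. (x, y) \<in> R}"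
    and uv: "0 \<le> u" "0 \<le> v" "u + v = 1"
  have "u *\<^sub>R (x, y1) + v *\<^sub>R (x, y2) \<in> R"
    by (rule convexD[OF assms _ _ uv]) (use y in auto)
  moreover have "u *\<^sub>R (x, y1) + v *\<^sub>R (x, y2) = (x, u *\<^sub>R y1 + v *\<^sub>R y2)"
    using uv(3) by (simp add: scaleR_add_left[symmetric])
  ultimately show "u *\<^sub>R y1 + v *\<^sub>R y2 \<in> {y. (x, y) \<in> R}"
    by simp
qed

text \<open>Rockafellar's Theorem 6.8 for convex sets, extended to nearly convex ones.\<close>

lemma rel_interior_nearly_convex_fibre:
  fixes W :: "('a::euclidean_space \<times> 'b::euclidean_space) set"
  assumes "nearly_convex W"
  shows "(x, y) \<in> rel_interior W \<longleftrightarrow>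
    x \<in> rel_interior (fst ` W) \<and> y \<in> rel_interior {y. (x, y) \<in> W}"
proof -
  define R where "R = rel_interior W"
  define K where "K = closure R"
  have R: "convex R" "rel_interior R = R" "R \<subseteq> W" "W \<subseteq> K"
    using nearly_convex_rel_interior[OF assms] rel_interior_subset unfolding R_def K_def by auto
  have K: "convex K" "rel_interior K = R"
    using R(1,2) convex_rel_interior_closure unfolding K_def by auto
  have dom_fst: "\<And>S :: ('a \<times> 'b) set. {x. {y. (x, y) \<in> S} \<noteq> {}} = fst ` S"
    by force
  have ri_fst_W: "rel_interior (fst ` W) = fst ` R"
    using nearly_convex_linear_image(2)[OF linear_fst assms] unfolding R_def .
  have ri_fst_R: "rel_interior (fst ` R) = fst ` R"
    using rel_interior_convex_linear_image[OF linear_fst R(1)] R(2) by simp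
  have ri_fst_K: "rel_interior (fst ` K) = fst ` R"
    using rel_interior_convex_linear_image[OF linear_fst K(1)] K(2) by simp
  txt \<open>The convex case applies to both \<open>R\<close> and \<open>K\<close>, which have the same relative
    interior; the fibre of \<open>W\<close> is squeezed between their fibres.\<close>
  have fibre_R: "(x, y) \<in> R \<longleftrightarrow> x \<in> fst ` R \<and> y \<in> rel_interior {y. (x, y) \<in> R}" for y
    using rel_interior_projection[OF R(1) refl, of x y] unfolding dom_fst R(2) ri_fst_R .
  have fibre_K: "(x, y) \<in> R \<longleftrightarrow> x \<in> fst ` R \<and> y \<in> rel_interior {y. (x, y) \<in> K}" for y
    using rel_interior_projection[OF K(1) refl, of x y] unfolding dom_fst K(2) ri_fst_K .
  show ?thesis
    unfolding ri_fst_W R_def[symmetric]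
  proof (cases "x \<in> fst ` R")
    case False
    then show "(x, y) \<in> R \<longleftrightarrow> x \<in> fst ` R \<and> y \<in> rel_interior {y. (x, y) \<in> W}"
      by (metis fst_conv image_eqI)
  next
    case True
    have "rel_interior {y. (x, y) \<in> R} = rel_interior {y. (x, y) \<in> K}"
      using fibre_R fibre_K True by blast
    then have "closure {y. (x, y) \<in> K} = closure {y. (x, y) \<in> R}"
      by (metis convex_closure_rel_interior convex_fibre K(1) R(1))
    then have "{y. (x, y) \<in> W} \<subseteq> closure {y. (x, y) \<in> R}"
      using R(4) closure_subset[of "{y. (x, y) \<in> K}"] by blast
    moreover have "{y. (x, y) \<in> R} \<subseteq> {y. (x, y) \<in> W}"
      using R(3) by blast
    ultimately have "rel_interior {y. (x, y) \<in> W} = rel_interior {y. (x, y) \<in> R}"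
      by (intro rel_interior_between_convex_closure convex_fibre R(1))
    then show "(x, y) \<in> R \<longleftrightarrow> x \<in> fst ` R \<and> y \<in> rel_interior {y. (x, y) \<in> W}"
      using fibre_R[of y] True by simp
  qed
qed

lemma sv_gph_sv_inv: "sv_gph (sv_inv G) = prod.swap ` sv_gph G"
  unfolding sv_gph_def sv_inv_def by force

lemma sv_dom_sv_inv: "sv_dom (sv_inv G) = sv_rge G"
  unfolding sv_dom_def sv_inv_def sv_rge_def by auto

lemma linear_swap: "linear (prod.swap :: 'a::real_vector \<times> 'b::real_vector \<Rightarrow> 'b \<times> 'a)"
  by (rule linearI) auto

lemma nearly_convex_map_sv_inv:
  fixes G :: "'a::euclidean_space \<Rightarrow> 'b::euclidean_space set"
  assumes "nearly_convex_map G"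
  shows "nearly_convex_map (sv_inv G)"
  using nearly_convex_linear_image(1)[OF linear_swap] assms
  unfolding nearly_convex_map_def sv_gph_sv_inv by blast

lemma ri_sv_dom:
  fixes F :: "'a::euclidean_space \<Rightarrow> 'b::euclidean_space set"
  assumes "nearly_convex_map F"
  shows "ri (sv_dom F) = fst ` ri (sv_gph F)"
proof -
  have "sv_dom F = fst ` sv_gph F"
    unfolding sv_dom_def sv_gph_def by force
  then show ?thesis
    using nearly_convex_linear_image(2)[OF linear_fst] assms
    unfolding nearly_convex_map_def ri_eq_rel_interior by simp
qed

lemma ri_sv_rge:
  fixes F :: "'a::euclidean_space \<Rightarrow> 'b::euclidean_space set"
  assumes "nearly_convex_map F"
  shows "ri (sv_rge F) = snd ` ri (sv_gph F)"
proof -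
  have "sv_rge F = snd ` sv_gph F"
    unfolding sv_rge_def sv_gph_def by force
  then show ?thesis
    using nearly_convex_linear_image(2)[OF linear_snd] assms
    unfolding nearly_convex_map_def ri_eq_rel_interior by simp
qed

lemma mem_ri_sv_gph_iff:
  fixes F :: "'a::euclidean_space \<Rightarrow> 'b::euclidean_space set"
  assumes "nearly_convex_map F"
  shows "(x, y) \<in> ri (sv_gph F) \<longleftrightarrow> x \<in> ri (sv_dom F) \<and> y \<in> ri (F x)"
proof -
  have "fst ` sv_gph F = sv_dom F" "{y. (x, y) \<in> sv_gph F} = F x"
    unfolding sv_dom_def sv_gph_def by force+
  then show ?thesis
    using rel_interior_nearly_convex_fibre[of "sv_gph F" x y] assms
    unfolding nearly_convex_map_def ri_eq_rel_interior by simp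
qed

lemma mem_ri_sv_gph_iff_sv_inv:
  fixes G :: "'a::euclidean_space \<Rightarrow> 'b::euclidean_space set"
  assumes "nearly_convex_map G"
  shows "(y, z) \<in> ri (sv_gph G) \<longleftrightarrow> z \<in> ri (sv_rge G) \<and> y \<in> ri (sv_inv G z)"
proof -
  have "ri (sv_gph (sv_inv G)) = prod.swap ` ri (sv_gph G)"
    using nearly_convex_linear_image(2)[OF linear_swap] assms
    unfolding nearly_convex_map_def sv_gph_sv_inv ri_eq_rel_interior by blast
  then have "(y, z) \<in> ri (sv_gph G) \<longleftrightarrow> (z, y) \<in> ri (sv_gph (sv_inv G))"
    by force
  then show ?thesis
    using mem_ri_sv_gph_iff[OF nearly_convex_map_sv_inv[OF assms]]
    by (simp add: sv_dom_sv_inv)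
qed

lemma ri_sv_gph_sv_comp:
  fixes F :: "'a::euclidean_space \<Rightarrow> 'b::euclidean_space set"
    and G :: "'b \<Rightarrow> 'c::euclidean_space set"
  assumes F: "nearly_convex_map F" and G: "nearly_convex_map G"
    and qual: "ri (sv_rge F) \<inter> ri (sv_dom G) \<noteq> {}"
  shows "ri (sv_gph (sv_comp G F)) =
    {(x, z). \<exists>y. (x, y) \<in> ri (sv_gph F) \<and> (y, z) \<in> ri (sv_gph G)}"
proof -
  define h :: "'a \<times> 'b \<times> 'c \<Rightarrow> ('a \<times> 'b) \<times> 'c" where "h = (\<lambda>(x, y, z). ((x, y), z))"
  define \<pi> :: "('a \<times> 'b) \<times> 'c \<Rightarrow> 'a \<times> 'c" where "\<pi> = (\<lambda>((x, y), z). (x, z))"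
  have "linear h" "linear \<pi>"
    unfolding h_def \<pi>_def by (rule linearI; auto)+
  have nc_UNIV: "nearly_convex (UNIV :: 'c set)" "nearly_convex (UNIV :: 'a set)"
    by (simp_all add: convex_imp_nearly_convex)
  define A where "A = sv_gph F \<times> (UNIV :: 'c set)"
  define B where "B = h ` (UNIV \<times> sv_gph G)"
  have A: "nearly_convex A" "rel_interior A = ri (sv_gph F) \<times> UNIV"
    using nearly_convex_Times[OF F[unfolded nearly_convex_map_def] nc_UNIV(1)]
    unfolding A_def ri_eq_rel_interior by simp_all
  have B: "nearly_convex B" "rel_interior B = h ` (UNIV \<times> ri (sv_gph G))"
    using nearly_convex_linear_image[OF \<open>linear h\<close>
        nearly_convex_Times(1)[OF nc_UNIV(2) G[unfolded nearly_convex_map_def]]]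
      nearly_convex_Times(2)[OF nc_UNIV(2) G[unfolded nearly_convex_map_def]]
    unfolding B_def ri_eq_rel_interior by simp_all
  have rel_interior_AB: "rel_interior A \<inter> rel_interior B =
      {((x, y), z). (x, y) \<in> ri (sv_gph F) \<and> (y, z) \<in> ri (sv_gph G)}"
    unfolding A(2) B(2) h_def by force
  obtain y where "y \<in> snd ` ri (sv_gph F)" "y \<in> fst ` ri (sv_gph G)"
    using qual ri_sv_rge[OF F] ri_sv_dom[OF G] by blast
  then have meet: "rel_interior A \<inter> rel_interior B \<noteq> {}"
    unfolding rel_interior_AB by force
  have "sv_gph (sv_comp G F) = \<pi> ` (A \<inter> B)"
    unfolding sv_gph_def sv_comp_def A_def B_def h_def \<pi>_def by force
  then have "ri (sv_gph (sv_comp G F)) = \<pi> ` (rel_interior A \<inter> rel_interior B)"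
    using nearly_convex_linear_image(2)[OF \<open>linear \<pi>\<close> nearly_convex_Int(1)[OF A(1) B(1) meet]]
      nearly_convex_Int(2)[OF A(1) B(1) meet]
    unfolding ri_eq_rel_interior by simp
  then show ?thesis
    unfolding rel_interior_AB \<pi>_def by force
qed

theorem theorem3p8:
  fixes F :: "'a::euclidean_space \<Rightarrow> 'b::euclidean_space set"
    and G :: "'b \<Rightarrow> 'c::euclidean_space set"
  assumes "nearly_convex_map F"
    and "nearly_convex_map G"
    and "ri (sv_rge F) \<inter> ri (sv_dom G) \<noteq> {}"
  shows "ri (sv_gph (sv_comp G F)) =
    (ri (sv_dom F) \<times> ri (sv_rge G)) \<inter>
    {(x, z). ri (F x) \<inter> ri (sv_inv G z) \<noteq> {}}"
  unfolding ri_sv_gph_sv_comp[OF assms]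
  by (auto simp: mem_ri_sv_gph_iff[OF assms(1)] mem_ri_sv_gph_iff_sv_inv[OF assms(2)])

end
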